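(* Let $G$ be a $2$-connected non-Hamiltonian graph of order $n\ge 4$. Then $px_3(G)\le\lfloor n/2\rfloor$.
   Context: All graphs are finite, simple and undirected. An edge-coloring assigns colors to edges, adjacent edges being allowed to share a color. A tree in an edge-colored graph is proper if no two adjacent edges of it receive the same color. An edge-coloring of $G$ is a $3$-proper coloring if for every $3$-element set $S\subseteq V(G)$ there is a proper tree in $G$ containing all vertices of $S$; $px_3(G)$ is the minimum number of colors in a $3$-proper coloring of $G$. *)

theory Defs
  imports Main
begin

definition simple_graph :: "'a set \<Rightarrow> 'a set set \<Rightarrow> bool" where
  "simple_graph V E \<longleftrightarrow> finite V \<and>
     (\<forall>e\<in>E. \<exists>u v. u \<noteq> v \<and> u \<in> V \<and> v \<in> V \<and> e = {u, v})"

definition reach :: "'a set set \<Rightarrow> 'a \<Rightarrow> 'a \<Rightarrow> bool" where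
  "reach F u v \<longleftrightarrow> (u, v) \<in> {(x, y). {x, y} \<in> F}\<^sup>*"

definition connected_graph :: "'a set \<Rightarrow> 'a set set \<Rightarrow> bool" where
  "connected_graph V E \<longleftrightarrow> V \<noteq> {} \<and> (\<forall>u\<in>V. \<forall>v\<in>V. reach E u v)"

definition del_vertex_edges :: "'a set set \<Rightarrow> 'a \<Rightarrow> 'a set set" where
  "del_vertex_edges E v = {e \<in> E. v \<notin> e}"

definition two_connected :: "'a set \<Rightarrow> 'a set set \<Rightarrow> bool" where
  "two_connected V E \<longleftrightarrow> card V \<ge> 3 \<and> connected_graph V E \<and>
     (\<forall>v\<in>V. connected_graph (V - {v}) (del_vertex_edges E v))"

definition hamiltonian :: "'a set \<Rightarrow> 'a set set \<Rightarrow> bool" where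
  "hamiltonian V E \<longleftrightarrow> (\<exists>vs. distinct vs \<and> set vs = V \<and> length vs \<ge> 3 \<and>
     (\<forall>i < length vs. {vs ! i, vs ! ((i + 1) mod length vs)} \<in> E))"

definition is_tree_in :: "'a set \<Rightarrow> 'a set set \<Rightarrow> 'a set \<Rightarrow> 'a set set \<Rightarrow> bool" where
  "is_tree_in V E VT ET \<longleftrightarrow> VT \<subseteq> V \<and> ET \<subseteq> E \<and> (\<forall>e\<in>ET. e \<subseteq> VT) \<and>
     finite VT \<and> connected_graph VT ET \<and> card ET + 1 = card VT"

definition proper_edges :: "('a set \<Rightarrow> 'c) \<Rightarrow> 'a set set \<Rightarrow> bool" where
  "proper_edges c ET \<longleftrightarrow>
     (\<forall>e\<in>ET. \<forall>f\<in>ET. e \<noteq> f \<and> e \<inter> f \<noteq> {} \<longrightarrow> c e \<noteq> c f)"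

definition three_proper_coloring :: "'a set \<Rightarrow> 'a set set \<Rightarrow> ('a set \<Rightarrow> 'c) \<Rightarrow> bool" where
  "three_proper_coloring V E c \<longleftrightarrow>
     (\<forall>S. S \<subseteq> V \<and> card S = 3 \<longrightarrow>
        (\<exists>VT ET. is_tree_in V E VT ET \<and> S \<subseteq> VT \<and> proper_edges c ET))"

definition px3 :: "'a set \<Rightarrow> 'a set set \<Rightarrow> nat" where
  "px3 V E = (LEAST k. \<exists>c :: 'a set \<Rightarrow> nat. c ` E \<subseteq> {..<k} \<and> three_proper_coloring V E c)"

end

theory Submission imports Defs begin

text \<open>Let \<open>d = \<lfloor>n/2\<rfloor>\<close>. Grow a tree from a single vertex, keeping its maximum degree at most \<open>d\<close>
  and its edges properly coloured with \<open>d\<close> colours: an edge \<open>uw\<close> leaving the tree at a vertex \<open>u\<close>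
  of tree degree \<open>< d\<close> can always be added, because the new leaf \<open>w\<close> has no other tree edge
  and \<open>u\<close> sees fewer than \<open>d\<close> colours. A spanning tree of this kind contains every 3-set, so
  \<open>px\<^sub>3(G) \<le> d\<close>.

  If the growth gets stuck at a tree on \<open>X\<close>, 2-connectivity yields two boundary vertices, both of
  tree degree \<open>\<ge> d\<close>; as the degrees of a tree are positive and sum to \<open>2|X| - 2\<close>, this
  forces \<open>|X| = 2d = n - 1\<close>, all other tree vertices are leaves, and the last vertex \<open>y\<close> has exactly the two boundary
  vertices as neighbours. This is ruled out by starting with the path \<open>x\<^sub>1 w x\<^sub>2\<close> through a
  vertex \<open>w\<close> of degree 2, if there is one: \<open>w\<close> then has tree degree 2, so it would be a
  boundary vertex, although all its neighbours lie in the tree.\<close>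

lemma simple_graph_edgeD: "simple_graph V E \<Longrightarrow> {a, b} \<in> E \<Longrightarrow> a \<noteq> b \<and> a \<in> V \<and> b \<in> V"
  unfolding simple_graph_def by (metis doubleton_eq_iff insert_absorb2)

lemma simple_graph_edge_subset:
  assumes "simple_graph V E" "e \<in> E"
  shows "e \<subseteq> V"
proof -
  obtain u v where "u \<in> V" "v \<in> V" "e = {u, v}"
    using assms unfolding simple_graph_def by blast
  then show ?thesis by simp
qed

lemma simple_graph_card_edge: "simple_graph V E \<Longrightarrow> e \<in> E \<Longrightarrow> card e = 2"
  unfolding simple_graph_def by fastforce

lemma simple_graph_finite_edges: "simple_graph V E \<Longrightarrow> finite E"
  using simple_graph_edge_subset finite_subset[of E "Pow V"] by (auto simp: simple_graph_def)

lemma reach_refl: "reach F a a"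
  by (simp add: reach_def)

lemma reach_edge: "{a, b} \<in> F \<Longrightarrow> reach F a b"
  by (auto simp: reach_def)

lemma reach_trans: "reach F a b \<Longrightarrow> reach F b c \<Longrightarrow> reach F a c"
  unfolding reach_def by (rule rtrancl_trans)

lemma reach_mono: "F \<subseteq> F' \<Longrightarrow> reach F a b \<Longrightarrow> reach F' a b"
  unfolding reach_def using rtrancl_mono[of "{(x, y). {x, y} \<in> F}" "{(x, y). {x, y} \<in> F'}"]
  by auto

lemma reach_sym: "reach F a b \<Longrightarrow> reach F b a"
  unfolding reach_def
proof (induction rule: rtrancl_induct)
  case (step y z)
  then have "(z, y) \<in> {(x, y). {x, y} \<in> F}" by (simp add: insert_commute)
  then show ?case using step.IH by (rule converse_rtrancl_into_rtrancl)
qed simp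

lemma reach_crossing_edge:
  assumes "reach F x y" "x \<in> X" "y \<notin> X"
  obtains a b where "{a, b} \<in> F" "a \<in> X" "b \<notin> X"
proof -
  have "\<exists>a b. {a, b} \<in> F \<and> a \<in> X \<and> b \<notin> X"
    using assms(1,3) unfolding reach_def
  proof (induction rule: rtrancl_induct)
    case (step y z)
    then show ?case by (cases "y \<in> X") auto
  qed (use assms(2) in simp)
  then show thesis using that by blast
qed

lemma connected_graph_crossing_edge:
  assumes "connected_graph V E" "x \<in> X" "X \<subseteq> V" "y \<in> V - X"
  obtains a b where "{a, b} \<in> E" "a \<in> X" "b \<notin> X"
proof -
  have "reach E x y" using assms by (auto simp: connected_graph_def)
  then show thesis using assms(2,4) that by (meson DiffD2 reach_crossing_edge)
qed

lemma connected_graph_insert_leaf: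
  assumes "connected_graph X T" "u \<in> X"
  shows "connected_graph (insert w X) (insert {u, w} T)"
proof -
  let ?F = "insert {u, w} T"
  have to_w: "reach ?F x w" if "x \<in> insert w X" for x
  proof (cases "x = w")
    case False
    then have "reach T x u" using assms that by (auto simp: connected_graph_def)
    then have "reach ?F x u" by (rule reach_mono[rotated]) blast
    then show ?thesis using reach_edge[of u w ?F] by (blast intro: reach_trans)
  qed (simp add: reach_refl)
  show ?thesis
    unfolding connected_graph_def
  proof (intro conjI ballI)
    fix a b assume "a \<in> insert w X" "b \<in> insert w X"
    then show "reach ?F a b" using to_w reach_sym reach_trans by metis
  qed simp
qed

definition degree :: "'a set set \<Rightarrow> 'a \<Rightarrow> nat" where
  "degree T v = card {e \<in> T. v \<in> e}"

definition neighbours :: "'a set set \<Rightarrow> 'a \<Rightarrow> 'a set" where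
  "neighbours E v = {w. {v, w} \<in> E}"

lemma degree_insert:
  assumes "finite T" "e \<notin> T"
  shows "degree (insert e T) v = (if v \<in> e then Suc (degree T v) else degree T v)"
proof (cases "v \<in> e")
  case True
  then have "{f \<in> insert e T. v \<in> f} = insert e {f \<in> T. v \<in> f}" by auto
  then show ?thesis using assms True by (simp add: degree_def)
next
  case False
  then have "{f \<in> insert e T. v \<in> f} = {f \<in> T. v \<in> f}" by auto
  then show ?thesis using False by (simp add: degree_def)
qed

lemma degree_sum_eq:
  assumes "finite X" "finite T" "\<forall>e\<in>T. e \<subseteq> X \<and> card e = 2"
  shows "(\<Sum>v\<in>X. degree T v) = 2 * card T"
proof -
  have "(\<Sum>v\<in>X. degree T v) = (\<Sum>v\<in>X. \<Sum>e\<in>T. if v \<in> e then 1 else 0)"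
    unfolding degree_def using assms(2) by (simp add: sum.inter_filter[symmetric])
  also have "\<dots> = (\<Sum>e\<in>T. \<Sum>v\<in>X. if v \<in> e then 1 else 0)"
    by (rule sum.swap)
  also have "\<dots> = (\<Sum>e\<in>T. card e)"
  proof (rule sum.cong[OF refl])
    fix e assume "e \<in> T"
    then have "{v \<in> X. v \<in> e} = e" using assms(3) by auto
    then show "(\<Sum>v\<in>X. if v \<in> e then 1 else 0) = card e"
      using assms(1) sum.inter_filter[of X "\<lambda>_. 1::nat" "\<lambda>v. v \<in> e"] by simp
  qed
  also have "\<dots> = 2 * card T"
    using assms(3) by simp
  finally show ?thesis .
qed

lemma is_tree_in_finite_edges: "simple_graph V E \<Longrightarrow> is_tree_in V E X T \<Longrightarrow> finite T"
  unfolding is_tree_in_def using simple_graph_finite_edges finite_subset by blast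

lemma tree_degree_sum:
  assumes "simple_graph V E" "is_tree_in V E X T"
  shows "(\<Sum>v\<in>X. degree T v) + 2 = 2 * card X"
proof -
  have "\<forall>e\<in>T. e \<subseteq> X \<and> card e = 2"
    using assms simple_graph_card_edge unfolding is_tree_in_def by blast
  then show ?thesis
    using degree_sum_eq[of X T] is_tree_in_finite_edges[OF assms] assms(2)
    by (simp add: is_tree_in_def)
qed

lemma tree_degree_pos:
  assumes "is_tree_in V E X T" "finite T" "v \<in> X" "u \<in> X" "u \<noteq> v"
  shows "1 \<le> degree T v"
proof -
  have "reach T v u" using assms by (auto simp: is_tree_in_def connected_graph_def)
  then obtain a b where "{a, b} \<in> T" "a \<in> {v}" "b \<notin> {v}"
    using assms(5) by (elim reach_crossing_edge) auto
  then have "{e \<in> T. v \<in> e} \<noteq> {}" by blast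
  then show ?thesis using assms(2) by (simp add: degree_def Suc_le_eq card_gt_0_iff)
qed

lemma sum_ge_with_two_heavy:
  fixes f :: "'a \<Rightarrow> nat"
  assumes "finite X" "\<forall>v\<in>X. 1 \<le> f v" "b\<^sub>1 \<in> X" "b\<^sub>2 \<in> X" "b\<^sub>1 \<noteq> b\<^sub>2" "d \<le> f b\<^sub>1" "d \<le> f b\<^sub>2"
  shows "card X + 2 * (d - 1) + card {v \<in> X - {b\<^sub>1, b\<^sub>2}. 2 \<le> f v} \<le> (\<Sum>v\<in>X. f v)"
proof -
  let ?R = "X - {b\<^sub>1, b\<^sub>2}"
  have "card {v \<in> ?R. 2 \<le> f v} = (\<Sum>v\<in>?R. if 2 \<le> f v then 1 else 0)"
    using assms(1) by (simp add: sum.inter_filter[symmetric])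
  then have "card ?R + card {v \<in> ?R. 2 \<le> f v} = (\<Sum>v\<in>?R. 1 + (if 2 \<le> f v then 1 else 0))"
    by (simp only: sum.distrib) simp
  also have "\<dots> \<le> (\<Sum>v\<in>?R. f v)"
    using assms(2) by (intro sum_mono) auto
  finally have rest: "card ?R + card {v \<in> ?R. 2 \<le> f v} \<le> (\<Sum>v\<in>?R. f v)" .
  have "(\<Sum>v\<in>X. f v) = f b\<^sub>1 + (\<Sum>v\<in>X - {b\<^sub>1}. f v)"
    using assms(1,3) by (rule sum.remove)
  also have "(\<Sum>v\<in>X - {b\<^sub>1}. f v) = f b\<^sub>2 + (\<Sum>v\<in>?R. f v)"
    using assms(1,4,5) sum.remove[of "X - {b\<^sub>1}" b\<^sub>2 f] by (simp add: Diff_insert2[symmetric])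
  finally have split: "(\<Sum>v\<in>X. f v) = f b\<^sub>1 + f b\<^sub>2 + (\<Sum>v\<in>?R. f v)" by simp
  have "card {b\<^sub>1, b\<^sub>2} \<le> card X"
    using assms(1,3,4) by (intro card_mono) auto
  then have "card ?R + 2 = card X"
    using assms(1,3-5) by (simp add: card_Diff_subset)
  moreover have "1 + (d - 1) \<le> f b\<^sub>1" "1 + (d - 1) \<le> f b\<^sub>2"
    using assms(2-4,6,7) by auto
  ultimately show ?thesis
    using rest split by linarith
qed

lemma exists_unused_colour:
  fixes c :: "'b \<Rightarrow> nat"
  assumes "finite A" "card A < d"
  obtains col where "col < d" "col \<notin> c ` A"
proof -
  have "card (c ` A) < card {..<d}" using card_image_le[OF assms(1), of c] assms(2) by simp
  then have "\<not> {..<d} \<subseteq> c ` A" using assms(1) by (meson card_mono finite_imageI not_le)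
  then show thesis using that by blast
qed

lemma proper_edges_insert_leaf:
  assumes "proper_edges c T" "\<forall>e\<in>T. w \<notin> e" "col \<notin> c ` {e \<in> T. u \<in> e}"
  shows "proper_edges (c({u, w} := col)) (insert {u, w} T)"
proof -
  have "{u, w} \<notin> T" using assms(2) by blast
  moreover have "col \<noteq> c f" if "f \<in> T" "f \<inter> {u, w} \<noteq> {}" for f
    using that assms(2,3) by blast
  ultimately show ?thesis
    using assms(1) unfolding proper_edges_def by (simp add: Int_commute) metis
qed

definition bounded_proper_tree ::
    "'a set \<Rightarrow> 'a set set \<Rightarrow> nat \<Rightarrow> 'a set \<Rightarrow> 'a set set \<Rightarrow> ('a set \<Rightarrow> nat) \<Rightarrow> bool" where
  "bounded_proper_tree V E d X T c \<longleftrightarrow>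
     is_tree_in V E X T \<and> proper_edges c T \<and> c ` T \<subseteq> {..<d} \<and> (\<forall>v. degree T v \<le> d)"

lemma bounded_proper_tree_singleton: "v \<in> V \<Longrightarrow> bounded_proper_tree V E d {v} {} c"
  unfolding bounded_proper_tree_def is_tree_in_def connected_graph_def proper_edges_def degree_def
  by (simp add: reach_def)

lemma is_tree_in_insert_leaf:
  assumes sg: "simple_graph V E" and tr: "is_tree_in V E X T"
    and "u \<in> X" "w \<notin> X" "{u, w} \<in> E"
  shows "is_tree_in V E (insert w X) (insert {u, w} T)"
proof -
  have XV: "X \<subseteq> V" and TE: "T \<subseteq> E" and Tsub: "\<forall>e\<in>T. e \<subseteq> X" and fX: "finite X"
    and con: "connected_graph X T" and cT: "card T + 1 = card X"
    using tr by (simp_all add: is_tree_in_def)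
  have "w \<in> V" using simple_graph_edgeD[OF sg assms(5)] by blast
  moreover have "{u, w} \<notin> T" using Tsub assms(4) by blast
  then have "card (insert {u, w} T) + 1 = card (insert w X)"
    using cT fX assms(4) is_tree_in_finite_edges[OF sg tr] by simp
  moreover have "\<forall>e\<in>insert {u, w} T. e \<subseteq> insert w X"
    using Tsub assms(3) by blast
  ultimately show ?thesis
    using XV TE fX assms(5) connected_graph_insert_leaf[OF con assms(3)]
    unfolding is_tree_in_def by simp
qed

lemma bounded_proper_tree_extend:
  assumes sg: "simple_graph V E" and tree: "bounded_proper_tree V E d X T c"
    and "u \<in> X" "w \<notin> X" "{u, w} \<in> E" "degree T u < d"
  obtains c' where "bounded_proper_tree V E d (insert w X) (insert {u, w} T) c'"
proof -
  have tr: "is_tree_in V E X T" and proper: "proper_edges c T" and range: "c ` T \<subseteq> {..<d}"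
    and deg_le: "\<forall>v. degree T v \<le> d"
    using tree by (simp_all add: bounded_proper_tree_def)
  have fT: "finite T" using is_tree_in_finite_edges[OF sg tr] .
  have w_fresh: "\<forall>e\<in>T. w \<notin> e" and new: "{u, w} \<notin> T"
    using tr assms(4) unfolding is_tree_in_def by blast+
  have "finite {e \<in> T. u \<in> e}" "card {e \<in> T. u \<in> e} < d"
    using fT assms(6) by (simp_all add: degree_def)
  then obtain col where col: "col < d" "col \<notin> c ` {e \<in> T. u \<in> e}"
    by (rule exists_unused_colour)
  have "degree T w = 0"
    using w_fresh by (auto simp: degree_def card_eq_0_iff)
  have "degree (insert {u, w} T) v \<le> d" for v
  proof (cases "v \<in> {u, w}")
    case True
    then have "degree T v < d" using \<open>degree T w = 0\<close> assms(6) by auto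
    then show ?thesis using True by (simp add: degree_insert[OF fT new])
  next
    case False
    then show ?thesis using deg_le by (simp add: degree_insert[OF fT new])
  qed
  moreover have "c({u, w} := col) ` insert {u, w} T \<subseteq> {..<d}"
    using range col(1) new by auto
  moreover have "proper_edges (c({u, w} := col)) (insert {u, w} T)"
    using proper w_fresh col(2) by (rule proper_edges_insert_leaf)
  ultimately show thesis
    using that[of "c({u, w} := col)"] is_tree_in_insert_leaf[OF sg tr assms(3-5)]
    unfolding bounded_proper_tree_def by blast
qed

definition degree_two_vertex :: "'a set set \<Rightarrow> 'a \<Rightarrow> 'a \<Rightarrow> 'a \<Rightarrow> bool" where
  "degree_two_vertex E w x\<^sub>1 x\<^sub>2 \<longleftrightarrow> x\<^sub>1 \<noteq> x\<^sub>2 \<and> neighbours E w = {x\<^sub>1, x\<^sub>2}"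

definition covers_degree_two_vertex :: "'a set set \<Rightarrow> 'a set set \<Rightarrow> bool" where
  "covers_degree_two_vertex E T \<longleftrightarrow>
     (\<exists>w x\<^sub>1 x\<^sub>2. degree_two_vertex E w x\<^sub>1 x\<^sub>2 \<and> {x\<^sub>1, w} \<in> T \<and> {w, x\<^sub>2} \<in> T) \<or>
     (\<forall>w x\<^sub>1 x\<^sub>2. \<not> degree_two_vertex E w x\<^sub>1 x\<^sub>2)"

lemma covers_degree_two_vertex_mono:
  "covers_degree_two_vertex E T \<Longrightarrow> T \<subseteq> T' \<Longrightarrow> covers_degree_two_vertex E T'"
  unfolding covers_degree_two_vertex_def by blast

lemma exists_initial_bounded_proper_tree:
  assumes sg: "simple_graph V E" and "V \<noteq> {}" "2 \<le> d"
  shows "\<exists>X T c. bounded_proper_tree V E d X T c \<and> covers_degree_two_vertex E T"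
proof (cases "\<exists>w x\<^sub>1 x\<^sub>2. degree_two_vertex E w x\<^sub>1 x\<^sub>2")
  case True
  then obtain w x\<^sub>1 x\<^sub>2 where w: "x\<^sub>1 \<noteq> x\<^sub>2" "neighbours E w = {x\<^sub>1, x\<^sub>2}"
    by (auto simp: degree_two_vertex_def)
  then have e1: "{x\<^sub>1, w} \<in> E" and e2: "{w, x\<^sub>2} \<in> E"
    by (auto simp: neighbours_def insert_commute)
  have v1: "x\<^sub>1 \<noteq> w" "x\<^sub>1 \<in> V" and v2: "w \<noteq> x\<^sub>2"
    using simple_graph_edgeD[OF sg e1] simple_graph_edgeD[OF sg e2] by simp_all
  have "x\<^sub>1 \<in> {x\<^sub>1}" "w \<notin> {x\<^sub>1}" "degree {} x\<^sub>1 < d"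
    using v1 assms(3) by (simp_all add: degree_def)
  then obtain c\<^sub>1 where t1: "bounded_proper_tree V E d (insert w {x\<^sub>1}) (insert {x\<^sub>1, w} {}) c\<^sub>1"
    by (rule bounded_proper_tree_extend[OF sg bounded_proper_tree_singleton[OF v1(2)] _ _ e1])
  have "{e \<in> insert {x\<^sub>1, w} {}. w \<in> e} = {{x\<^sub>1, w}}"
    by auto
  then have "w \<in> insert w {x\<^sub>1}" "x\<^sub>2 \<notin> insert w {x\<^sub>1}" "degree (insert {x\<^sub>1, w} {}) w < d"
    using w(1) v2 assms(3) by (simp_all add: degree_def)
  then obtain c\<^sub>2 where
    "bounded_proper_tree V E d (insert x\<^sub>2 (insert w {x\<^sub>1})) (insert {w, x\<^sub>2} (insert {x\<^sub>1, w} {})) c\<^sub>2"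
    by (rule bounded_proper_tree_extend[OF sg t1 _ _ e2])
  moreover have "covers_degree_two_vertex E (insert {w, x\<^sub>2} (insert {x\<^sub>1, w} {}))"
    unfolding covers_degree_two_vertex_def degree_two_vertex_def using w
    by (intro disjI1 exI[of _ w] exI[of _ x\<^sub>1] exI[of _ x\<^sub>2]) simp
  ultimately show ?thesis by blast
next
  case False
  then have "covers_degree_two_vertex E {}"
    unfolding covers_degree_two_vertex_def by blast
  moreover obtain v where "v \<in> V" using assms(2) by blast
  ultimately have "bounded_proper_tree V E d {v} {} (\<lambda>_. 0) \<and> covers_degree_two_vertex E {}"
    by (simp add: bounded_proper_tree_singleton)
  then show ?thesis by blast
qed

lemma two_connected_two_crossing_edges:
  assumes tc: "two_connected V E" and XV: "X \<subseteq> V" and y: "y \<in> V - X" and "2 \<le> card X"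
  obtains b\<^sub>1 b\<^sub>2 z\<^sub>1 z\<^sub>2 where "b\<^sub>1 \<noteq> b\<^sub>2" "b\<^sub>1 \<in> X" "b\<^sub>2 \<in> X" "{b\<^sub>1, z\<^sub>1} \<in> E" "{b\<^sub>2, z\<^sub>2} \<in> E"
    "z\<^sub>1 \<notin> X" "z\<^sub>2 \<notin> X"
proof -
  have conn: "connected_graph V E" and conn': "connected_graph (V - {b}) (del_vertex_edges E b)"
    if "b \<in> V" for b
    using tc that by (simp_all add: two_connected_def)
  have "X \<noteq> {}" using \<open>2 \<le> card X\<close> by auto
  then obtain x where "x \<in> X" by blast
  obtain b\<^sub>1 z\<^sub>1 where b1: "{b\<^sub>1, z\<^sub>1} \<in> E" "b\<^sub>1 \<in> X" "z\<^sub>1 \<notin> X"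
    by (rule connected_graph_crossing_edge[OF conn \<open>x \<in> X\<close> XV y]) (use y in blast)
  have "\<not> X \<subseteq> {b\<^sub>1}"
  proof
    assume "X \<subseteq> {b\<^sub>1}"
    then have "card X \<le> 1" using card_mono[of "{b\<^sub>1}" X] by simp
    with \<open>2 \<le> card X\<close> show False by simp
  qed
  then obtain x' where "x' \<in> X" "x' \<noteq> b\<^sub>1" by blast
  then have b1': "b\<^sub>1 \<in> V" "x' \<in> X - {b\<^sub>1}" "X - {b\<^sub>1} \<subseteq> V - {b\<^sub>1}" "y \<in> (V - {b\<^sub>1}) - (X - {b\<^sub>1})"
    using XV y b1(2) by auto
  obtain b\<^sub>2 z\<^sub>2 where "{b\<^sub>2, z\<^sub>2} \<in> del_vertex_edges E b\<^sub>1" "b\<^sub>2 \<in> X - {b\<^sub>1}" "z\<^sub>2 \<notin> X - {b\<^sub>1}"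
    by (rule connected_graph_crossing_edge[OF conn'[OF b1'(1)] b1'(2-4)])
  then have "{b\<^sub>2, z\<^sub>2} \<in> E" "b\<^sub>1 \<noteq> b\<^sub>2" "b\<^sub>2 \<in> X" "z\<^sub>2 \<notin> X"
    by (auto simp: del_vertex_edges_def)
  then show thesis using that b1 by blast
qed

lemma stuck_tree_degree_bound:
  assumes sg: "simple_graph V E" and tc: "two_connected V E" and "0 < d"
    and tr: "is_tree_in V E X T" and y: "y \<in> V - X"
    and stuck: "\<forall>u\<in>X. \<forall>w. w \<notin> X \<longrightarrow> {u, w} \<in> E \<longrightarrow> d \<le> degree T u"
  obtains b\<^sub>1 b\<^sub>2 z\<^sub>1 z\<^sub>2 where "b\<^sub>1 \<noteq> b\<^sub>2" "b\<^sub>1 \<in> X" "b\<^sub>2 \<in> X" "{b\<^sub>1, z\<^sub>1} \<in> E" "{b\<^sub>2, z\<^sub>2} \<in> E"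
    "z\<^sub>1 \<notin> X" "z\<^sub>2 \<notin> X"
    "card X + 2 * (d - 1) + card {v \<in> X - {b\<^sub>1, b\<^sub>2}. 2 \<le> degree T v} + 2 \<le> 2 * card X"
proof -
  have fT: "finite T" using is_tree_in_finite_edges[OF sg tr] .
  have XV: "X \<subseteq> V" and fX: "finite X" and "X \<noteq> {}" and cT: "card T + 1 = card X"
    using tr by (auto simp: is_tree_in_def connected_graph_def)
  then obtain x where "x \<in> X" by blast
  have "connected_graph V E" using tc by (simp add: two_connected_def)
  then obtain b z where b: "{b, z} \<in> E" "b \<in> X" "z \<notin> X"
    using \<open>x \<in> X\<close> XV y by (rule connected_graph_crossing_edge)
  have "degree T b \<le> card T"
    unfolding degree_def using fT by (intro card_mono) auto
  moreover have "d \<le> degree T b" using stuck b by blast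
  ultimately have "2 \<le> card X" using cT \<open>0 < d\<close> by linarith
  then obtain b\<^sub>1 b\<^sub>2 z\<^sub>1 z\<^sub>2 where b12: "b\<^sub>1 \<noteq> b\<^sub>2" "b\<^sub>1 \<in> X" "b\<^sub>2 \<in> X" "{b\<^sub>1, z\<^sub>1} \<in> E" "{b\<^sub>2, z\<^sub>2} \<in> E"
    "z\<^sub>1 \<notin> X" "z\<^sub>2 \<notin> X"
    by (rule two_connected_two_crossing_edges[OF tc XV y])
  have "d \<le> degree T b\<^sub>1" "d \<le> degree T b\<^sub>2" using stuck b12 by blast+
  moreover have "\<forall>v\<in>X. 1 \<le> degree T v"
    using tree_degree_pos[OF tr fT _ b12(2)] tree_degree_pos[OF tr fT _ b12(3)] b12(1) by metis
  ultimately have "card X + 2 * (d - 1) + card {v \<in> X - {b\<^sub>1, b\<^sub>2}. 2 \<le> degree T v}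
      \<le> (\<Sum>v\<in>X. degree T v)"
    using sum_ge_with_two_heavy[OF fX _ b12(2,3,1)] by blast
  then show thesis
    using that[OF b12] tree_degree_sum[OF sg tr] by linarith
qed

lemma stuck_tree_extremal:
  assumes sg: "simple_graph V E" and tc: "two_connected V E"
    and "card V \<le> 2 * d + 1" and "2 \<le> d"
    and tr: "is_tree_in V E X T" and y: "y \<in> V - X"
    and stuck: "\<forall>u\<in>X. \<forall>w. w \<notin> X \<longrightarrow> {u, w} \<in> E \<longrightarrow> d \<le> degree T u"
  obtains b\<^sub>1 b\<^sub>2 where "b\<^sub>1 \<noteq> b\<^sub>2" "neighbours E y = {b\<^sub>1, b\<^sub>2}"
    "\<forall>v\<in>X. 2 \<le> degree T v \<longrightarrow> v \<in> {b\<^sub>1, b\<^sub>2}"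
proof -
  have XV: "X \<subseteq> V" and fX: "finite X" and fV: "finite V"
    using tr sg by (auto simp: is_tree_in_def simple_graph_def)
  have "0 < d" using \<open>2 \<le> d\<close> by simp
  then obtain b\<^sub>1 b\<^sub>2 z\<^sub>1 z\<^sub>2 where b: "b\<^sub>1 \<noteq> b\<^sub>2" "b\<^sub>1 \<in> X" "b\<^sub>2 \<in> X" "{b\<^sub>1, z\<^sub>1} \<in> E" "{b\<^sub>2, z\<^sub>2} \<in> E"
    "z\<^sub>1 \<notin> X" "z\<^sub>2 \<notin> X"
    and count: "card X + 2 * (d - 1) + card {v \<in> X - {b\<^sub>1, b\<^sub>2}. 2 \<le> degree T v} + 2 \<le> 2 * card X"
    by (rule stuck_tree_degree_bound[OF sg tc _ tr y stuck])
  have "card X < card V" using XV y fV by (intro psubset_card_mono) auto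
  then have card_X: "card X + 1 = card V" and "card {v \<in> X - {b\<^sub>1, b\<^sub>2}. 2 \<le> degree T v} = 0"
    using count \<open>card V \<le> 2 * d + 1\<close> \<open>2 \<le> d\<close> by linarith+
  then have heavy: "\<forall>v\<in>X. 2 \<le> degree T v \<longrightarrow> v \<in> {b\<^sub>1, b\<^sub>2}"
    using fX by auto
  have "card (V - X) = 1" using card_X XV fX by (simp add: card_Diff_subset)
  then have outside: "z = y" if "z \<in> V" "z \<notin> X" for z
    using that y by (metis DiffI card_1_singletonE singletonD)
  have "z\<^sub>1 = y" "z\<^sub>2 = y"
    using outside b simple_graph_edgeD[OF sg] by blast+
  moreover have "v \<in> {b\<^sub>1, b\<^sub>2}" if "{y, v} \<in> E" for v
  proof -
    have "v \<in> X" using outside[of v] y simple_graph_edgeD[OF sg that] by blast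
    moreover have "{v, y} \<in> E" using that by (simp add: insert_commute)
    ultimately have "d \<le> degree T v" using stuck y by blast
    then show ?thesis using heavy \<open>v \<in> X\<close> \<open>2 \<le> d\<close> by auto
  qed
  ultimately have "neighbours E y = {b\<^sub>1, b\<^sub>2}"
    using b by (auto simp: neighbours_def insert_commute)
  then show thesis using that b(1) heavy by blast
qed

lemma bounded_proper_tree_extendable:
  assumes sg: "simple_graph V E" and tc: "two_connected V E"
    and "card V \<le> 2 * d + 1" and "2 \<le> d"
    and tree: "bounded_proper_tree V E d X T c" and "X \<noteq> V"
    and cover: "covers_degree_two_vertex E T"
  shows "\<exists>u\<in>X. \<exists>w. w \<notin> X \<and> {u, w} \<in> E \<and> degree T u < d"
proof (rule ccontr)
  assume "\<not> ?thesis"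
  then have stuck: "\<forall>u\<in>X. \<forall>w. w \<notin> X \<longrightarrow> {u, w} \<in> E \<longrightarrow> d \<le> degree T u"
    by (auto simp: not_less)
  have tr: "is_tree_in V E X T" using tree by (simp add: bounded_proper_tree_def)
  then have Tsub: "\<forall>e\<in>T. e \<subseteq> X" and "X \<subseteq> V" by (simp_all add: is_tree_in_def)
  then obtain y where y: "y \<in> V - X" using \<open>X \<noteq> V\<close> by blast
  obtain b\<^sub>1 b\<^sub>2 where b: "b\<^sub>1 \<noteq> b\<^sub>2" "neighbours E y = {b\<^sub>1, b\<^sub>2}"
    and heavy: "\<forall>v\<in>X. 2 \<le> degree T v \<longrightarrow> v \<in> {b\<^sub>1, b\<^sub>2}"
    by (rule stuck_tree_extremal[OF sg tc assms(3,4) tr y stuck])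
  from cover show False
    unfolding covers_degree_two_vertex_def degree_two_vertex_def
  proof (elim disjE exE conjE)
    fix w x\<^sub>1 x\<^sub>2 assume w: "x\<^sub>1 \<noteq> x\<^sub>2" "neighbours E w = {x\<^sub>1, x\<^sub>2}" "{x\<^sub>1, w} \<in> T" "{w, x\<^sub>2} \<in> T"
    have "{x\<^sub>1, w} \<noteq> {w, x\<^sub>2}" using w(1) by (auto simp: doubleton_eq_iff)
    then have "card {{x\<^sub>1, w}, {w, x\<^sub>2}} = 2" by simp
    moreover have "{{x\<^sub>1, w}, {w, x\<^sub>2}} \<subseteq> {e \<in> T. w \<in> e}" using w(3,4) by simp
    moreover have "finite {e \<in> T. w \<in> e}" using is_tree_in_finite_edges[OF sg tr] by simp
    ultimately have "2 \<le> degree T w"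
      unfolding degree_def by (metis card_mono)
    moreover have "w \<in> X" "x\<^sub>1 \<in> X" "x\<^sub>2 \<in> X" using w Tsub by auto
    ultimately have "w \<in> {b\<^sub>1, b\<^sub>2}" using heavy by blast
    then have "y \<in> neighbours E w" using b(2) by (auto simp: neighbours_def insert_commute)
    then show False using w(2) y \<open>x\<^sub>1 \<in> X\<close> \<open>x\<^sub>2 \<in> X\<close> by auto
  next
    assume "\<forall>w x\<^sub>1 x\<^sub>2. \<not> (x\<^sub>1 \<noteq> x\<^sub>2 \<and> neighbours E w = {x\<^sub>1, x\<^sub>2})"
    then show False using b by blast
  qed
qed

lemma exists_bounded_proper_spanning_tree:
  assumes sg: "simple_graph V E" and tc: "two_connected V E"
    and "card V \<le> 2 * d + 1" and "2 \<le> d"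
    and "bounded_proper_tree V E d X T c" and "covers_degree_two_vertex E T"
  shows "\<exists>T' c'. bounded_proper_tree V E d V T' c'"
  using assms(5,6)
proof (induction "card (V - X)" arbitrary: X T c rule: less_induct)
  case less
  show ?case
  proof (cases "X = V")
    case False
    then obtain u w where uw: "u \<in> X" "w \<notin> X" "{u, w} \<in> E" "degree T u < d"
      using bounded_proper_tree_extendable[OF sg tc assms(3,4) less.prems(1) False less.prems(2)] by blast
    then obtain c' where tree': "bounded_proper_tree V E d (insert w X) (insert {u, w} T) c'"
      using bounded_proper_tree_extend[OF sg less.prems(1)] by blast
    have "w \<in> V" using simple_graph_edgeD[OF sg uw(3)] by blast
    then have "V - insert w X \<subset> V - X" using uw(2) by blast
    then have "card (V - insert w X) < card (V - X)"
      using sg by (simp add: simple_graph_def psubset_card_mono)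
    moreover have "covers_degree_two_vertex E (insert {u, w} T)"
      using less.prems(2) by (rule covers_degree_two_vertex_mono) blast
    ultimately show ?thesis using less.hyps tree' by blast
  qed (use less.prems in blast)
qed

text \<open>Colour 0 is used for the edges outside the tree, hence \<open>0 < k\<close>.\<close>

lemma px3_le_of_spanning_proper_tree:
  fixes c :: "'a set \<Rightarrow> nat"
  assumes "is_tree_in V E V T" "proper_edges c T" "c ` T \<subseteq> {..<k}" "0 < k"
  shows "px3 V E \<le> k"
proof -
  define c' where "c' e = (if e \<in> T then c e else 0)" for e
  have "c' ` E \<subseteq> {..<k}" using assms(3,4) by (auto simp: c'_def)
  moreover have "proper_edges c' T" using assms(2) by (simp add: proper_edges_def c'_def)
  then have "three_proper_coloring V E c'"
    using assms(1) unfolding three_proper_coloring_def by blast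
  ultimately show ?thesis unfolding px3_def by (blast intro: Least_le)
qed

theorem theorem4p2:
  fixes V :: "'a set" and E :: "'a set set"
  assumes "simple_graph V E"
    and "two_connected V E"
    and "\<not> hamiltonian V E"
    and "card V \<ge> 4"
  shows "px3 V E \<le> card V div 2"
proof -
  define d where "d = card V div 2"
  have "2 \<le> d" "card V \<le> 2 * d + 1" using assms(4) by (auto simp: d_def)
  have "V \<noteq> {}" using assms(4) by auto
  then obtain X T c where "bounded_proper_tree V E d X T c" "covers_degree_two_vertex E T"
    using exists_initial_bounded_proper_tree[OF assms(1) _ \<open>2 \<le> d\<close>] by blast
  then obtain T' c' where "bounded_proper_tree V E d V T' c'"
    using exists_bounded_proper_spanning_tree[OF assms(1,2) \<open>card V \<le> 2 * d + 1\<close> \<open>2 \<le> d\<close>] by blast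
  then have "px3 V E \<le> d"
    using \<open>2 \<le> d\<close> by (intro px3_le_of_spanning_proper_tree) (auto simp: bounded_proper_tree_def)
  then show ?thesis by (simp add: d_def)
qed

end
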